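(* For every $T>0$, $$\lim_{\lambda\to\infty}\liminf_{m\to\infty}\mathbb{P}^{(m)}_\sigma\Big(\sup_{s\le T}|x(s)|_{\mathbb{A}_{\mathbb{Q}}}<\lambda\Big)=1.$$
   Context: Fix a real exponent $b>0$ and a sequence $\sigma=(\sigma_p)_{p\in\mathcal P}$ of nonnegative reals indexed by the set $\mathcal P$ of primes with $\sum_p\sigma_p<\infty$. For a prime $p$, $\mathbb{Q}_p$ denotes the $p$-adic numbers with absolute value $|\cdot|_p$ and $\mathbb{Z}_p$ its closed unit ball. Let $G_p\subset\mathbb{Q}_p$ be the set of $p$-adic numbers of the form $\sum_{k<0}a_kp^k$ with $a_k\in\{0,\dots,p-1\}$, only finitely many nonzero; $G_p$ is a set of representatives of $\mathbb{Q}_p/\mathbb{Z}_p$ and is given the group structure of $\mathbb{Q}_p/\mathbb{Z}_p$. Let $X^{(p)}$ be a $G_p$-valued random variable with $\Pr(|X^{(p)}|_p=p^k)=(p^b-1)p^{-kb}$ for every integer $k\ge1$, and, conditionally on $|X^{(p)}|_p=p^k$, uniformly distributed on the finite set $\{x\in G_p:|x|_p=p^k\}$. Let $X^{(p)}_1,X^{(p)}_2,\dots$ be i.i.d. copies of $X^{(p)}$ and $S^{(p)}_n=X^{(p)}_1+\dots+X^{(p)}_n$ (sum in the group $G_p$), $S^{(p)}_0=0$. Put $D_p=\frac{p^b(p-1)}{p^{b+1}-1}\sigma_p$. For an integer $m\ge0$, let $\mathbb{P}^{(m)}_p$ be the law on $D(\mathbb{Q}_p)$ (càdlàg paths $[0,\infty)\to\mathbb{Q}_p$)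 of $t\mapsto p^mS^{(p)}_{\lfloor D_pp^{mb}t\rfloor}$, and $\mathbb{P}^{(m)}_\sigma=\prod_{p}\mathbb{P}^{(m)}_p$ the product measure on $\prod_pD(\mathbb{Q}_p)$ (independent components). For $y=(y_p)\in\prod_p\mathbb{Q}_p$ write $|y|_{\mathbb{A}_{\mathbb{Q}}}=\sup_p|y_p|_p/p$ (the adelic absolute value on $\mathbb{A}_{\mathbb{Q}}=\{y: y_p\in\mathbb{Z}_p\text{ for all but finitely many }p\}$). *)

theory Defs
  imports "HOL-Probability.Probability" "HOL-Computational_Algebra.Primes"
begin

definition padic_abs :: "nat \<Rightarrow> rat \<Rightarrow> real" where
  "padic_abs p q = (if q = 0 then 0 else
     (let (a, d) = quotient_of q in
       real p powi (int (multiplicity (int p) d) - int (multiplicity (int p) a))))"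

text \<open>G_p: the p-adic numbers sum_{k<0} a_k p^k with finitely many nonzero digits,
  identified with the rationals in [0,1) whose denominator is a power of p.
  The group law of Q_p/Z_p is addition modulo 1 (frac).\<close>
definition Gp :: "nat \<Rightarrow> rat set" where
  "Gp p = {q. 0 \<le> q \<and> q < 1 \<and> (\<exists>k::nat. q * of_nat p ^ k \<in> \<int>)}"

definition Gshell :: "nat \<Rightarrow> nat \<Rightarrow> rat set" where
  "Gshell p k = {x \<in> Gp p. padic_abs p x = real p ^ k}"

text \<open>Law of k with Pr(|X|_p = p^k) = (p^b - 1) p^{-kb}, k \<ge> 1.\<close>
definition Kdist :: "real \<Rightarrow> nat \<Rightarrow> nat pmf" where
  "Kdist b p = embed_pmf (\<lambda>k. if k \<ge> 1 then (real p powr b - 1) * real p powr (- (real k * b)) else 0)"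

definition Xpmf :: "real \<Rightarrow> nat \<Rightarrow> rat pmf" where
  "Xpmf b p = bind_pmf (Kdist b p) (\<lambda>k. pmf_of_set (Gshell p k))"

definition Dp :: "real \<Rightarrow> (nat \<Rightarrow> real) \<Rightarrow> nat \<Rightarrow> real" where
  "Dp b \<sigma> p = real p powr b * (real p - 1) / (real p powr (b + 1) - 1) * \<sigma> p"

definition Idx :: "(nat \<times> nat) set" where
  "Idx = {(p, i). prime p \<and> 1 \<le> i}"

definition Omega :: "real \<Rightarrow> (nat \<times> nat \<Rightarrow> rat) measure" where
  "Omega b = PiM Idx (\<lambda>(p, i). measure_pmf (Xpmf b p))"

definition Swalk :: "(nat \<times> nat \<Rightarrow> rat) \<Rightarrow> nat \<Rightarrow> nat \<Rightarrow> rat" where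
  "Swalk \<omega> p n = frac (\<Sum>i\<in>{1..n}. \<omega> (p, i))"

definition path :: "real \<Rightarrow> (nat \<Rightarrow> real) \<Rightarrow> nat \<Rightarrow> (nat \<times> nat \<Rightarrow> rat) \<Rightarrow> nat \<Rightarrow> real \<Rightarrow> rat" where
  "path b \<sigma> m \<omega> p t = of_nat p ^ m * Swalk \<omega> p (nat \<lfloor>Dp b \<sigma> p * real p powr (real m * b) * t\<rfloor>)"

definition adelic_abs :: "(nat \<Rightarrow> rat) \<Rightarrow> ereal" where
  "adelic_abs y = (SUP p\<in>{p. prime p}. ereal (padic_abs p (y p) / real p))"

definition bounded_event :: "real \<Rightarrow> (nat \<Rightarrow> real) \<Rightarrow> nat \<Rightarrow> real \<Rightarrow> real \<Rightarrow> (nat \<times> nat \<Rightarrow> rat) set" where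
  "bounded_event b \<sigma> m T lam =
     {\<omega> \<in> space (Omega b). (SUP s\<in>{0..T}. adelic_abs (\<lambda>p. path b \<sigma> m \<omega> p s)) < ereal lam}"

end

theory Submission
  imports Defs
begin

text \<open>
  Fix \<open>L \<ge> 1\<close> and let \<open>p^e \<le> L < p^(e+1)\<close>. Up to time \<open>T\<close> the \<open>p\<close>-component of the
  rescaled path stays in \<open>|x|\<^sub>p \<le> p^(e+1)\<close>, i.e. contributes at most \<open>L\<close> to the adelic
  absolute value, unless one of the first \<open>\<lfloor>D\<^sub>p p^(mb) T\<rfloor>\<close> increments has
  \<open>|X|\<^sub>p > p^(m+1+e)\<close>, which has probability \<open>p^(-b(m+1+e))\<close>. By the union bound this
  happens with probability at most \<open>D\<^sub>p T p^(-b(e+1)) \<le> \<sigma>\<^sub>p T L^(-b)\<close>: the factor \<open>p^(mb)\<close>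
  of the time scale cancels exactly. Summing over \<open>p\<close>, the path leaves the adelic ball of
  radius \<open>\<lambda> > L\<close> with probability at most \<open>T (\<Sum>\<^sub>p \<sigma>\<^sub>p) L^(-b)\<close>, uniformly in \<open>m\<close>.
\<close>

section \<open>The \<open>p\<close>-adic absolute value on \<open>G\<^sub>p\<close>\<close>

lemma quotient_of_denom_dvd:
  assumes "quotient_of y = (a, d)" and "y * of_int c \<in> \<int>"
  shows "d dvd c"
proof -
  obtain z where z: "y * of_int c = of_int z" using assms(2) Ints_cases by blast
  have "y = of_int a / of_int d" using quotient_of_div[OF assms(1)] .
  with z have "of_int (a * c) = (of_int (z * d) :: rat)"
    using quotient_of_denom_pos[OF assms(1)] by (simp add: field_simps)
  then have "d dvd a * c" by (simp only: of_int_eq_iff) (metis dvd_triv_right)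
  moreover have "coprime d a" using quotient_of_coprime[OF assms(1)] by (simp add: coprime_commute)
  ultimately show ?thesis using coprime_dvd_mult_right_iff by blast
qed

lemma padic_abs_le_power:
  assumes p: "prime p" and "y * of_nat p ^ j \<in> \<int>"
  shows "padic_abs p y \<le> real p ^ j"
proof (cases "y = 0")
  case True
  then show ?thesis by (simp add: padic_abs_def)
next
  case False
  obtain a d where ad: "quotient_of y = (a, d)" by (cases "quotient_of y")
  have "d dvd int p ^ j" by (rule quotient_of_denom_dvd[OF ad]) (use assms(2) in simp)
  then have "multiplicity (int p) d \<le> multiplicity (int p) (int p ^ j)"
    by (rule dvd_imp_multiplicity_le) (use p in auto)
  also have "\<dots> = j" using p by (simp add: prime_imp_prime_elem)
  finally have "multiplicity (int p) d \<le> j" .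
  moreover have "real p \<ge> 1" using p prime_gt_0_nat by (simp add: Suc_le_eq)
  ultimately have "real p powi (int (multiplicity (int p) d) - int (multiplicity (int p) a))
      \<le> real p powi int j"
    by (intro power_int_increasing) auto
  then show ?thesis using False ad by (simp add: padic_abs_def)
qed

lemma mult_power_Ints_mono:
  assumes "x * of_nat p ^ k \<in> \<int>" and "k \<le> j"
  shows "x * of_nat p ^ j \<in> \<int>"
proof -
  have "x * of_nat p ^ j = (x * of_nat p ^ k) * of_nat p ^ (j - k)"
    using assms(2) by (simp add: mult.assoc flip: power_add)
  then show ?thesis using assms(1) by simp
qed

lemma Gshell_mult_power_Ints:
  assumes p: "prime p" and x: "x \<in> Gshell p k"
  shows "x * of_nat p ^ k \<in> \<int>"
proof -
  from x obtain l where x01: "0 \<le> x" "x < 1" and l: "x * of_nat p ^ l \<in> \<int>"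
    and abs_x: "padic_abs p x = real p ^ k"
    by (auto simp: Gshell_def Gp_def)
  have p1: "real p > 1" using p prime_gt_1_nat by simp
  have "x \<noteq> 0" using abs_x p1 by (auto simp: padic_abs_def)
  obtain a d where ad: "quotient_of x = (a, d)" by (cases "quotient_of x")
  have x_eq: "x = of_int a / of_int d" using quotient_of_div[OF ad] .
  have pi: "prime (int p)" using p by simp
  have "d dvd int p ^ l" by (rule quotient_of_denom_dvd[OF ad]) (use l in simp)
  then obtain e where "normalize d = int p ^ e" using divides_primepow[OF pi] by blast
  then have d: "d = int p ^ e" using quotient_of_denom_pos[OF ad] by simp
  have "e \<noteq> 0"
  proof
    assume "e = 0"
    then have "x = of_int a" using x_eq d by simp
    with x01 \<open>x \<noteq> 0\<close> show False by (metis Ints_of_int frac_eq_0_iff frac_eq)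
  qed
  then have "int p dvd d" using d by (simp add: dvd_power)
  with quotient_of_coprime[OF ad] pi have "\<not> int p dvd a"
    by (metis coprime_common_divisor not_prime_unit)
  then have "multiplicity (int p) a = 0" by (rule not_dvd_imp_multiplicity_0)
  moreover have "multiplicity (int p) d = e" using d pi by (simp add: prime_imp_prime_elem)
  ultimately have "padic_abs p x = real p ^ e" using \<open>x \<noteq> 0\<close> ad by (simp add: padic_abs_def)
  with abs_x p1 have "e = k" by (simp add: power_inject_exp)
  then have "x * of_nat p ^ k = of_int a" using x_eq d quotient_of_denom_pos[OF ad] by simp
  then show ?thesis by simp
qed

lemma finite_Gshell:
  assumes p: "prime p"
  shows "finite (Gshell p k)"
proof -
  have pk: "(of_nat p ^ k :: rat) > 0" using p prime_gt_0_nat by simp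
  have "Gshell p k \<subseteq> (\<lambda>z. of_int z / of_nat p ^ k) ` {0..int p ^ k}"
  proof
    fix x assume x: "x \<in> Gshell p k"
    obtain z where z: "x * of_nat p ^ k = of_int z"
      using Gshell_mult_power_Ints[OF p x] Ints_cases by blast
    have "0 \<le> x" "x < 1" using x by (auto simp: Gshell_def Gp_def)
    with z pk have "0 \<le> (of_int z :: rat)" "(of_int z :: rat) \<le> of_nat p ^ k"
      by (metis mult_nonneg_nonneg less_imp_le, metis less_imp_le mult_le_cancel_right1 not_less)
    then have "z \<in> {0..int p ^ k}"
      by (simp del: of_int_power) (metis of_int_le_iff of_int_of_nat_eq of_int_power)
    moreover have "x = of_int z / of_nat p ^ k" using z pk by (simp add: field_simps)
    ultimately show "x \<in> (\<lambda>z. of_int z / of_nat p ^ k) ` {0..int p ^ k}" by blast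
  qed
  then show ?thesis by (rule finite_subset) simp
qed

lemma Gshell_nonempty:
  assumes p: "prime p" and k: "k \<ge> 1"
  shows "Gshell p k \<noteq> {}"
proof -
  define y :: rat where "y = 1 / of_nat p ^ k"
  have p1: "p > 1" using p prime_gt_1_nat by simp
  have pk: "(of_nat p ^ k :: rat) > 1" using p1 k by simp
  have "y = Fract 1 (int p ^ k)" unfolding y_def by (simp add: Fract_of_int_quotient)
  then have "quotient_of y = (1, int p ^ k)" using p1 by (simp add: quotient_of_Fract)
  moreover have "y \<noteq> 0" using pk p1 unfolding y_def by simp
  ultimately have "padic_abs p y = real p ^ k" using p by (simp add: padic_abs_def prime_imp_prime_elem)
  moreover have "y \<in> Gp p"
  proof -
    have "y * of_nat p ^ k = 1" "0 \<le> y" "y < 1" using pk p1 unfolding y_def by (auto simp: field_simps)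
    then show ?thesis unfolding Gp_def by (metis (mono_tags, lifting) Ints_1 mem_Collect_eq)
  qed
  ultimately show ?thesis unfolding Gshell_def by blast
qed

section \<open>The law of one increment\<close>

lemma pmf_Kdist:
  assumes p: "real p > 1" and b: "b > 0"
  shows "pmf (Kdist b p) k = (if k \<ge> 1 then (real p powr b - 1) * (real p powr (- b)) ^ k else 0)"
proof -
  define q where "q = real p powr b"
  define r where "r = real p powr (- b)"
  have p0: "real p > 0" using p by simp
  have q1: "q > 1" unfolding q_def using p b by (simp add: powr_less_cancel_iff[of _ 0, simplified])
  have qr: "q * r = 1" unfolding q_def r_def using p by (simp add: powr_add[symmetric])
  then have "r = 1 / q" using q1 by (simp add: field_simps)
  then have r01: "0 < r" "r < 1" using q1 by auto
  define f where "f = (\<lambda>k::nat. if k \<ge> 1 then (q - 1) * r ^ k else 0)"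
  have f_eq: "(\<lambda>k. if k \<ge> 1 then (real p powr b - 1) * real p powr (- (real k * b)) else 0) = f"
    unfolding f_def q_def r_def using p0 by (simp add: powr_power cong: if_cong)
  have f_nonneg: "f k \<ge> 0" for k unfolding f_def using q1 r01 by auto
  have "(\<lambda>k. (q - 1) * (r * r ^ k)) sums ((q - 1) * (r * (1 / (1 - r))))"
    using geometric_sums[of r] r01 by (intro sums_mult) simp
  then have "f sums ((q - 1) * (r * (1 / (1 - r))) + f 0)"
    unfolding f_def by (subst sums_Suc_iff[symmetric]) simp
  moreover have "(q - 1) * (r * (1 / (1 - r))) + f 0 = 1"
    unfolding f_def using qr r01 by (simp add: field_simps)
  ultimately have "f sums 1" by simp
  then have "(\<integral>\<^sup>+x. ennreal (f x) \<partial>count_space UNIV) = 1"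
    using f_nonneg by (simp add: nn_integral_count_space_nat suminf_ennreal2 sums_iff)
  then have "pmf (embed_pmf f) k = f k" using f_nonneg by (intro pmf_embed_pmf) auto
  then show ?thesis unfolding Kdist_def f_eq by (simp add: f_def q_def r_def)
qed

lemma measure_Kdist_greater:
  assumes p: "real p > 1" and b: "b > 0"
  shows "measure (Kdist b p) {k. k > j} = (real p powr (- b)) ^ j"
proof -
  define r where "r = real p powr (- b)"
  have qr: "real p powr b * r = 1" unfolding r_def using p by (simp add: powr_add[symmetric])
  have "(\<Sum>k\<le>j. pmf (Kdist b p) k) = 1 - r ^ j"
  proof (induction j)
    case 0
    then show ?case by (simp add: pmf_Kdist[OF p b])
  next
    case (Suc j)
    have "(real p powr b - 1) * r ^ Suc j = r ^ j * (real p powr b * r) - r ^ Suc j"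
      by (simp add: algebra_simps)
    with Suc qr show ?case by (simp add: pmf_Kdist[OF p b] r_def)
  qed
  moreover have "{k. k > j} = UNIV - {..j}" by auto
  ultimately show ?thesis
    using measure_pmf.prob_compl[of "{..j}" "Kdist b p"]
    by (simp add: measure_measure_pmf_finite r_def)
qed

text \<open>For \<open>x \<in> G\<^sub>p\<close>, \<open>x p^j \<notin> \<int>\<close> means \<open>|x|\<^sub>p > p^j\<close>.\<close>

lemma prob_Xpmf_not_mult_power_Ints:
  assumes p: "prime p" and b: "b > 0"
  shows "measure (Xpmf b p) {x. x * of_nat p ^ j \<notin> \<int>} \<le> (real p powr (- b)) ^ j"
proof -
  let ?A = "{x. x * of_nat p ^ j \<notin> \<int>}"
  have p1: "real p > 1" using p prime_gt_1_nat by simp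
  have "emeasure (pmf_of_set (Gshell p k)) ?A \<le> indicator {k. k > j} k"
    if "k \<in> set_pmf (Kdist b p)" for k
  proof (cases "k > j")
    case True
    then show ?thesis by (simp add: measure_pmf.emeasure_le_1)
  next
    case False
    have "k \<ge> 1" using that pmf_Kdist[OF p1 b, of k] by (auto simp: set_pmf_eq split: if_splits)
    have "set_pmf (pmf_of_set (Gshell p k)) \<inter> ?A = {}"
      using mult_power_Ints_mono[OF Gshell_mult_power_Ints[OF p]] False
        finite_Gshell[OF p] Gshell_nonempty[OF p \<open>k \<ge> 1\<close>]
      by auto
    then have "measure (pmf_of_set (Gshell p k)) ?A = 0" by (simp add: measure_pmf_zero_iff)
    then show ?thesis by (simp add: measure_pmf.emeasure_eq_measure)
  qed
  then have "(\<integral>\<^sup>+k. emeasure (pmf_of_set (Gshell p k)) ?A \<partial>Kdist b p)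
      \<le> (\<integral>\<^sup>+k. indicator {k. k > j} k \<partial>Kdist b p)"
    by (intro nn_integral_mono_AE) (simp add: AE_measure_pmf_iff)
  then have "emeasure (Xpmf b p) ?A \<le> (\<integral>\<^sup>+k. indicator {k. k > j} k \<partial>Kdist b p)"
    unfolding Xpmf_def by simp
  also have "\<dots> = ennreal ((real p powr (- b)) ^ j)"
    using measure_Kdist_greater[OF p1 b, of j] by (simp add: measure_pmf.emeasure_eq_measure)
  finally show ?thesis by (simp add: measure_pmf.emeasure_eq_measure)
qed

section \<open>The product space of increments\<close>

lemma product_prob_space_Xpmf: "product_prob_space (\<lambda>(p, i). measure_pmf (Xpmf b p))"
  unfolding product_prob_space_def product_prob_space_axioms_def product_sigma_finite_def
  by (auto simp: prob_space_measure_pmf split: prod.splits intro: prob_space_imp_sigma_finite)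

lemma prob_space_Omega: "prob_space (Omega b)"
proof -
  interpret product_prob_space "\<lambda>(p, i). measure_pmf (Xpmf b p)" Idx
    by (rule product_prob_space_Xpmf)
  show ?thesis unfolding Omega_def by (rule P.prob_space_axioms)
qed

lemma measure_Omega_coordinate:
  assumes "(p, i) \<in> Idx"
  shows "measure (Omega b) {\<omega> \<in> space (Omega b). P (\<omega> (p, i))} = measure (Xpmf b p) {x. P x}"
proof -
  interpret product_prob_space "\<lambda>(p, i). measure_pmf (Xpmf b p)" Idx
    by (rule product_prob_space_Xpmf)
  show ?thesis
    unfolding Omega_def measure_def using emeasure_PiM_Collect_single[OF assms, of "{x. P x}"] by simp
qed

lemma measurable_Omega_coordinate:
  assumes "(p, i) \<in> Idx"
  shows "(\<lambda>\<omega>. \<omega> (p, i)) \<in> measurable (Omega b) (count_space UNIV)"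
proof -
  have "(\<lambda>\<omega>. \<omega> (p, i)) \<in> measurable (Omega b) (measure_pmf (Xpmf b p))"
    unfolding Omega_def
    using measurable_component_singleton[OF assms, of "\<lambda>(p, i). measure_pmf (Xpmf b p)"] by simp
  then show ?thesis by (simp add: measurable_cong_sets sets_measure_pmf)
qed

lemma sets_Omega_coordinate:
  assumes "(p, i) \<in> Idx"
  shows "{\<omega> \<in> space (Omega b). P (\<omega> (p, i))} \<in> sets (Omega b)"
proof -
  have "(\<lambda>\<omega>. \<omega> (p, i)) -` {x. P x} \<inter> space (Omega b) \<in> sets (Omega b)"
    by (rule measurable_sets[OF measurable_Omega_coordinate[OF assms]]) simp
  moreover have "(\<lambda>\<omega>. \<omega> (p, i)) -` {x. P x} \<inter> space (Omega b) = {\<omega> \<in> space (Omega b). P (\<omega> (p, i))}"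
    by blast
  ultimately show ?thesis by simp
qed

lemma measurable_count_space_add:
  fixes f g :: "'a \<Rightarrow> 'b :: {countable, plus}"
  assumes "f \<in> measurable M (count_space UNIV)" "g \<in> measurable M (count_space UNIV)"
  shows "(\<lambda>x. f x + g x) \<in> measurable M (count_space UNIV)"
proof -
  have "(\<lambda>x. (f x, g x)) \<in> measurable M (count_space UNIV \<Otimes>\<^sub>M count_space UNIV)"
    using assms by (rule measurable_Pair)
  then have pair: "(\<lambda>x. (f x, g x)) \<in> measurable M (count_space (UNIV \<times> UNIV))"
    by (subst (asm) pair_measure_countable) auto
  have add: "case_prod (+) \<in> measurable (count_space (UNIV \<times> UNIV)) (count_space (UNIV :: 'b set))"
    by (simp only: measurable_count_space_eq1) auto
  show ?thesis using measurable_compose[OF pair add] by simp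
qed

lemma measurable_Omega_partial_sum:
  assumes "prime p"
  shows "(\<lambda>\<omega>. \<Sum>i\<in>{1..n}. \<omega> (p, i)) \<in> measurable (Omega b) (count_space UNIV)"
proof (induction n)
  case 0
  then show ?case by simp
next
  case (Suc n)
  have "(p, Suc n) \<in> Idx" using assms by (simp add: Idx_def)
  from measurable_count_space_add[OF Suc measurable_Omega_coordinate[OF this]]
  show ?case by (simp add: add.commute)
qed

section \<open>The rescaled walk and its large jumps\<close>

definition walk_steps :: "real \<Rightarrow> (nat \<Rightarrow> real) \<Rightarrow> nat \<Rightarrow> nat \<Rightarrow> real \<Rightarrow> nat" where
  "walk_steps b \<sigma> m p t = nat \<lfloor>Dp b \<sigma> p * real p powr (real m * b) * t\<rfloor>"

lemma bounded_event_eq: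
  "bounded_event b \<sigma> m T lam = {\<omega> \<in> space (Omega b).
     (SUP p\<in>{p. prime p}. SUP n\<in>walk_steps b \<sigma> m p ` {0..T}.
        ereal (padic_abs p (of_nat p ^ m * Swalk \<omega> p n) / real p)) < ereal lam}"
  unfolding bounded_event_def adelic_abs_def path_def walk_steps_def
  by (subst SUP_commute) (simp add: image_image)

lemma bounded_event_in_sets: "bounded_event b \<sigma> m T lam \<in> sets (Omega b)"
proof -
  have "(\<lambda>\<omega>. ereal (padic_abs p (of_nat p ^ m * Swalk \<omega> p n) / real p)) \<in> borel_measurable (Omega b)"
    if "prime p" for p n
  proof -
    have "(\<lambda>y. ereal (padic_abs p (of_nat p ^ m * frac y) / real p)) \<in> measurable (count_space UNIV) borel"
      by simp
    then show ?thesis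
      unfolding Swalk_def using measurable_compose[OF measurable_Omega_partial_sum[OF that]] by blast
  qed
  then have "(\<lambda>\<omega>. SUP p\<in>{p. prime p}. SUP n\<in>walk_steps b \<sigma> m p ` {0..T}.
        ereal (padic_abs p (of_nat p ^ m * Swalk \<omega> p n) / real p)) \<in> borel_measurable (Omega b)"
    by (intro borel_measurable_SUP) auto
  then show ?thesis unfolding bounded_event_eq by measurable
qed

lemma Dp_bounds:
  assumes p: "prime p" and b: "b > 0" and \<sigma>: "\<sigma> p \<ge> 0"
  shows "0 \<le> Dp b \<sigma> p" "Dp b \<sigma> p \<le> \<sigma> p"
proof -
  define q where "q = real p powr b"
  have p1: "real p > 1" using p prime_gt_1_nat by simp
  have q1: "q > 1" unfolding q_def using p1 b by (simp add: powr_less_cancel_iff[of _ 0, simplified])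
  have "real p powr (b + 1) = q * real p" unfolding q_def using p1 by (simp add: powr_add)
  then have D: "Dp b \<sigma> p = q * (real p - 1) / (q * real p - 1) * \<sigma> p" unfolding Dp_def q_def by simp
  have den: "q * real p - 1 > 0" using less_1_mult[OF q1 p1] by simp
  have ratio_nonneg: "0 \<le> q * (real p - 1) / (q * real p - 1)" using q1 p1 den by simp
  have "q * (real p - 1) \<le> q * real p - 1" using q1 by (simp add: right_diff_distrib)
  then have ratio_le_1: "q * (real p - 1) / (q * real p - 1) \<le> 1" using den by simp
  show "0 \<le> Dp b \<sigma> p" unfolding D using mult_nonneg_nonneg[OF ratio_nonneg \<sigma>] .
  show "Dp b \<sigma> p \<le> \<sigma> p" unfolding D using mult_right_mono[OF ratio_le_1 \<sigma>] by simp
qed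

lemma walk_steps_mono:
  assumes "prime p" "b > 0" "\<sigma> p \<ge> 0" "s \<le> t"
  shows "walk_steps b \<sigma> m p s \<le> walk_steps b \<sigma> m p t"
  unfolding walk_steps_def
  using assms Dp_bounds(1)[of p b \<sigma>, OF assms(1-3)] by (intro nat_mono floor_mono mult_left_mono) auto

definition floor_logb :: "nat \<Rightarrow> real \<Rightarrow> nat" where
  "floor_logb p L = nat \<lfloor>log (real p) L\<rfloor>"

lemma power_floor_logb_le:
  assumes "real p > 1" and "L \<ge> 1"
  shows "real p ^ floor_logb p L \<le> L"
proof -
  have "real p ^ floor_logb p L = real p powr real (floor_logb p L)"
    using assms by (simp add: powr_realpow)
  also have "\<dots> \<le> real p powr log (real p) L"
    using assms by (intro powr_mono) (auto simp: floor_logb_def)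
  also have "\<dots> = L" using assms by simp
  finally show ?thesis .
qed

lemma less_power_Suc_floor_logb:
  assumes "real p > 1" and "L \<ge> 1"
  shows "L < real p ^ Suc (floor_logb p L)"
proof -
  have "real (floor_logb p L) = of_int \<lfloor>log (real p) L\<rfloor>" using assms by (simp add: floor_logb_def)
  then have "log (real p) L < real (Suc (floor_logb p L))"
    using real_of_int_floor_add_one_gt[of "log (real p) L"] by (simp only: of_nat_Suc)
  have "L = real p powr log (real p) L" using assms by simp
  also have "\<dots> < real p powr real (Suc (floor_logb p L))"
    using assms(1) \<open>log (real p) L < _\<close> by (intro powr_less_mono)
  also have "\<dots> = real p ^ Suc (floor_logb p L)" using assms by (intro powr_realpow) simp
  finally show ?thesis .
qed

lemma padic_abs_rescaled_walk_le:
  assumes p: "prime p" and jumps: "\<And>i. i \<in> {1..n} \<Longrightarrow> \<omega> (p, i) * of_nat p ^ (m + 1 + e) \<in> \<int>"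
  shows "padic_abs p (of_nat p ^ m * Swalk \<omega> p n) / real p \<le> real p ^ e"
proof -
  define s where "s = (\<Sum>i\<in>{1..n}. \<omega> (p, i))"
  define P :: rat where "P = of_nat p ^ (m + 1 + e)"
  have "s * P = (\<Sum>i\<in>{1..n}. \<omega> (p, i) * P)" unfolding s_def by (simp add: sum_distrib_right)
  also have "\<dots> \<in> \<int>" using jumps unfolding P_def by (intro Ints_sum) auto
  finally have "frac s * P = s * P - of_int \<lfloor>s\<rfloor> * P \<and> s * P \<in> \<int>"
    by (simp add: frac_def algebra_simps)
  moreover have "of_int \<lfloor>s\<rfloor> * P \<in> \<int>" unfolding P_def by simp
  ultimately have "frac s * P \<in> \<int>" by (metis Ints_diff)
  moreover have "(of_nat p ^ m * Swalk \<omega> p n) * of_nat p ^ (e + 1) = frac s * P"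
    unfolding Swalk_def s_def[symmetric] P_def by (simp add: power_add algebra_simps)
  ultimately have "padic_abs p (of_nat p ^ m * Swalk \<omega> p n) \<le> real p ^ (e + 1)"
    by (intro padic_abs_le_power[OF p]) simp
  moreover have "real p > 0" using p prime_gt_0_nat by simp
  ultimately show ?thesis by (simp add: divide_le_eq algebra_simps)
qed

text \<open>Some increment of the \<open>p\<close>-component up to time \<open>T\<close> has \<open>|X|\<^sub>p > p^(m+1+e)\<close>,
  where \<open>p^e \<le> L < p^(e+1)\<close>.\<close>

definition large_jump_event ::
    "real \<Rightarrow> (nat \<Rightarrow> real) \<Rightarrow> nat \<Rightarrow> real \<Rightarrow> real \<Rightarrow> nat \<Rightarrow> (nat \<times> nat \<Rightarrow> rat) set" where
  "large_jump_event b \<sigma> m T L p = {\<omega> \<in> space (Omega b).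
     \<exists>i\<in>{1..walk_steps b \<sigma> m p T}. \<omega> (p, i) * of_nat p ^ (m + 1 + floor_logb p L) \<notin> \<int>}"

lemma large_jump_event_eq:
  "large_jump_event b \<sigma> m T L p = (\<Union>i\<in>{1..walk_steps b \<sigma> m p T}.
     {\<omega> \<in> space (Omega b). \<omega> (p, i) * of_nat p ^ (m + 1 + floor_logb p L) \<notin> \<int>})"
  unfolding large_jump_event_def by auto

lemma large_jump_event_in_sets:
  assumes "prime p"
  shows "large_jump_event b \<sigma> m T L p \<in> sets (Omega b)"
  unfolding large_jump_event_eq using assms by (intro sets.finite_UN sets_Omega_coordinate) (auto simp: Idx_def)

lemma prob_large_jump_event_le_steps:
  assumes p: "prime p" and b: "b > 0"
  shows "measure (Omega b) (large_jump_event b \<sigma> m T L p)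
           \<le> real (walk_steps b \<sigma> m p T) * (real p powr (- b)) ^ (m + 1 + floor_logb p L)"
proof -
  interpret prob_space "Omega b" by (rule prob_space_Omega)
  define j where "j = m + 1 + floor_logb p L"
  have "measure (Omega b) (large_jump_event b \<sigma> m T L p)
      \<le> (\<Sum>i\<in>{1..walk_steps b \<sigma> m p T}.
           measure (Omega b) {\<omega> \<in> space (Omega b). \<omega> (p, i) * of_nat p ^ j \<notin> \<int>})"
    unfolding large_jump_event_eq j_def using p
    by (intro finite_measure_subadditive_finite) (auto intro: sets_Omega_coordinate simp: Idx_def)
  also have "\<dots> \<le> (\<Sum>i\<in>{1..walk_steps b \<sigma> m p T}. (real p powr (- b)) ^ j)"
  proof (rule sum_mono)
    fix i assume "i \<in> {1..walk_steps b \<sigma> m p T}"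
    then have "(p, i) \<in> Idx" using p by (simp add: Idx_def)
    then show "measure (Omega b) {\<omega> \<in> space (Omega b). \<omega> (p, i) * of_nat p ^ j \<notin> \<int>}
        \<le> (real p powr (- b)) ^ j"
      using measure_Omega_coordinate[of p i b "\<lambda>x. x * of_nat p ^ j \<notin> \<int>"]
        prob_Xpmf_not_mult_power_Ints[OF p b, of j]
      by simp
  qed
  finally show ?thesis unfolding j_def by simp
qed

lemma walk_steps_mult_tail_le:
  assumes p: "prime p" and b: "b > 0" and \<sigma>: "\<sigma> p \<ge> 0" and T: "T \<ge> 0" and L: "L \<ge> 1"
  shows "real (walk_steps b \<sigma> m p T) * (real p powr (- b)) ^ (m + 1 + floor_logb p L)
           \<le> \<sigma> p * T * L powr (- b)"
proof -
  define r where "r = real p powr (- b)"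
  define e where "e = floor_logb p L"
  have p1: "real p > 1" using p prime_gt_1_nat by simp
  have D: "0 \<le> Dp b \<sigma> p" "Dp b \<sigma> p \<le> \<sigma> p" using Dp_bounds[of p b \<sigma>, OF p b \<sigma>] .
  have "real (walk_steps b \<sigma> m p T) * r ^ (m + 1 + e)
      \<le> (Dp b \<sigma> p * real p powr (real m * b) * T) * r ^ (m + 1 + e)"
    using D T unfolding walk_steps_def r_def by (intro mult_right_mono) auto
  also have "\<dots> = Dp b \<sigma> p * T * (real p powr (real m * b) * r ^ m) * r ^ (e + 1)"
    by (simp add: power_add algebra_simps)
  also have "\<dots> = Dp b \<sigma> p * T * r ^ (e + 1)"
  proof -
    have "r ^ m = real p powr (real m * - b)" unfolding r_def using p1 by (intro powr_power) simp
    then have "real p powr (real m * b) * r ^ m = 1" using p1 by (simp flip: powr_add)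
    then show ?thesis by simp
  qed
  also have "\<dots> \<le> \<sigma> p * T * L powr (- b)"
  proof (rule mult_mono)
    have "r ^ (e + 1) = real p powr (real (e + 1) * - b)"
      unfolding r_def using p1 by (intro powr_power) simp
    also have "\<dots> = (real p powr real (e + 1)) powr (- b)" by (simp only: powr_powr)
    also have "\<dots> = (real p ^ (e + 1)) powr (- b)" by (subst powr_realpow) (use p1 in auto)
    also have "\<dots> \<le> L powr (- b)"
      using b L less_power_Suc_floor_logb[OF p1 L] unfolding e_def by (intro powr_mono2') auto
    finally show "r ^ (e + 1) \<le> L powr (- b)" .
  qed (use D T \<sigma> in \<open>auto simp: r_def mult_right_mono\<close>)
  finally show ?thesis unfolding r_def e_def .
qed

lemma prob_large_jump_event_le:
  assumes "prime p" and "b > 0" and "\<sigma> p \<ge> 0" and "T \<ge> 0" and "L \<ge> 1"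
  shows "measure (Omega b) (large_jump_event b \<sigma> m T L p) \<le> \<sigma> p * T * L powr (- b)"
  using prob_large_jump_event_le_steps[OF assms(1,2)] walk_steps_mult_tail_le[of p b \<sigma>, OF assms]
  by (rule order.trans)

lemma bounded_event_if_no_large_jump:
  assumes b: "b > 0" and \<sigma>: "\<And>p. prime p \<Longrightarrow> \<sigma> p \<ge> 0" and L: "1 \<le> L" "L < lam"
  shows "space (Omega b) - (\<Union>p\<in>{p. prime p}. large_jump_event b \<sigma> m T L p)
           \<subseteq> bounded_event b \<sigma> m T lam"
proof
  fix \<omega> assume \<omega>: "\<omega> \<in> space (Omega b) - (\<Union>p\<in>{p. prime p}. large_jump_event b \<sigma> m T L p)"
  have "ereal (padic_abs p (of_nat p ^ m * Swalk \<omega> p n) / real p) \<le> ereal L"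
    if p: "prime p" and n: "n \<in> walk_steps b \<sigma> m p ` {0..T}" for p n
  proof -
    have p1: "real p > 1" using p prime_gt_1_nat by simp
    have "n \<le> walk_steps b \<sigma> m p T" using n walk_steps_mono[of p b \<sigma>, OF p b \<sigma>[OF p]] by auto
    with \<omega> p have "\<omega> (p, i) * of_nat p ^ (m + 1 + floor_logb p L) \<in> \<int>" if "i \<in> {1..n}" for i
      using that unfolding large_jump_event_def by auto
    then have "padic_abs p (of_nat p ^ m * Swalk \<omega> p n) / real p \<le> real p ^ floor_logb p L"
      by (rule padic_abs_rescaled_walk_le[OF p])
    also have "\<dots> \<le> L" by (rule power_floor_logb_le[OF p1 L(1)])
    finally show ?thesis by simp
  qed
  then have "(SUP p\<in>{p. prime p}. SUP n\<in>walk_steps b \<sigma> m p ` {0..T}.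
        ereal (padic_abs p (of_nat p ^ m * Swalk \<omega> p n) / real p)) \<le> ereal L"
    by (auto intro!: SUP_least)
  also have "\<dots> < ereal lam" using L by simp
  finally show "\<omega> \<in> bounded_event b \<sigma> m T lam" using \<omega> unfolding bounded_event_eq by auto
qed

lemma summable_if_summable_on:
  fixes f :: "nat \<Rightarrow> real"
  assumes "\<And>n. n \<in> A \<Longrightarrow> f n \<ge> 0" and "f summable_on A"
  shows "summable (\<lambda>n. if n \<in> A then f n else 0)"
proof -
  have "(\<lambda>n. if n \<in> A then f n else 0) summable_on UNIV"
    using assms(2) by (subst summable_on_cong_neutral[where T = A and g = f]) auto
  then show ?thesis using assms(1) by (subst (asm) summable_on_UNIV_nonneg_real_iff) auto
qed

lemma prob_bounded_event_ge:
  assumes b: "b > 0" and \<sigma>: "\<And>p. prime p \<Longrightarrow> \<sigma> p \<ge> 0"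
    and summable: "summable (\<lambda>p. if prime p then \<sigma> p else 0)"
    and T: "T \<ge> 0" and L: "1 \<le> L" "L < lam"
  shows "1 - T * (\<Sum>p. if prime p then \<sigma> p else 0) * L powr (- b)
           \<le> measure (Omega b) (bounded_event b \<sigma> m T lam)"
proof -
  interpret prob_space "Omega b" by (rule prob_space_Omega)
  define A where "A = (\<lambda>p. if prime p then large_jump_event b \<sigma> m T L p else {})"
  define c where "c = T * L powr (- b)"
  have A_sets: "range A \<subseteq> sets (Omega b)" unfolding A_def using large_jump_event_in_sets by auto
  have A_le: "measure (Omega b) (A p) \<le> c * (if prime p then \<sigma> p else 0)" for p
  proof (cases "prime p")
    case True
    then show ?thesis
      unfolding A_def c_def using prob_large_jump_event_le[of p b \<sigma>, OF True b \<sigma>[OF True] T L(1)]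
      by (simp add: algebra_simps)
  qed (simp add: A_def)
  have summable_c: "summable (\<lambda>p. c * (if prime p then \<sigma> p else 0))"
    using summable by (rule summable_mult)
  then have summable_A: "summable (\<lambda>p. measure (Omega b) (A p))"
    using A_le by (intro summable_comparison_test'[OF summable_c]) auto
  have "measure (Omega b) (\<Union>p. A p) \<le> (\<Sum>p. measure (Omega b) (A p))"
    using A_sets summable_A by (intro finite_measure_subadditive_countably) auto
  also have "\<dots> \<le> (\<Sum>p. c * (if prime p then \<sigma> p else 0))"
    using A_le summable_A summable_c by (intro suminf_le) auto
  also have "\<dots> = c * (\<Sum>p. if prime p then \<sigma> p else 0)" using summable by (rule suminf_mult)
  finally have "1 - c * (\<Sum>p. if prime p then \<sigma> p else 0)
      \<le> measure (Omega b) (space (Omega b) - (\<Union>p. A p))"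
    using A_sets by (subst prob_compl) auto
  also have "\<dots> \<le> measure (Omega b) (bounded_event b \<sigma> m T lam)"
  proof (rule finite_measure_mono[OF _ bounded_event_in_sets])
    have "(\<Union>p. A p) = (\<Union>p\<in>{p. prime p}. large_jump_event b \<sigma> m T L p)" unfolding A_def by auto
    then show "space (Omega b) - (\<Union>p. A p) \<subseteq> bounded_event b \<sigma> m T lam"
      using bounded_event_if_no_large_jump[OF b \<sigma> L] by simp
  qed
  finally show ?thesis unfolding c_def by (simp add: algebra_simps)
qed

lemma tendsto_one_minus_powr_neg_at_top:
  fixes b c K :: real
  assumes "b > 0" and "c > 0"
  shows "((\<lambda>x. 1 - K * (x / c) powr (- b)) \<longlongrightarrow> 1) at_top"
proof -
  have "filterlim (\<lambda>x::real. x / c) at_top at_top"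
    using filterlim_tendsto_pos_mult_at_top[OF tendsto_const _ filterlim_ident, of "1 / c"] assms(2)
    by simp
  then have "((\<lambda>x. (x / c) powr (- b)) \<longlongrightarrow> 0) at_top"
    using assms(1) by (intro tendsto_neg_powr) auto
  then have "((\<lambda>x. 1 - K * (x / c) powr (- b)) \<longlongrightarrow> 1 - K * 0) at_top"
    by (intro tendsto_intros)
  then show ?thesis by simp
qed

theorem proposition4:
  fixes b T :: real and \<sigma> :: "nat \<Rightarrow> real"
  assumes "b > 0"
    and "\<And>p. prime p \<Longrightarrow> \<sigma> p \<ge> 0"
    and "\<sigma> summable_on {p. prime p}"
    and "T > 0"
  shows "((\<lambda>lam. liminf (\<lambda>m. ereal (measure (Omega b) (bounded_event b \<sigma> m T lam))))
           \<longlongrightarrow> 1) at_top"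
proof -
  interpret prob_space "Omega b" by (rule prob_space_Omega)
  define K where "K = T * (\<Sum>p. if prime p then \<sigma> p else 0)"
  have summable: "summable (\<lambda>p. if prime p then \<sigma> p else 0)"
    using summable_if_summable_on[of "{p. prime p}" \<sigma>] assms(2,3) by simp
  have lower: "eventually (\<lambda>lam. ereal (1 - K * (lam / 2) powr (- b))
      \<le> liminf (\<lambda>m. ereal (measure (Omega b) (bounded_event b \<sigma> m T lam)))) at_top"
    using eventually_ge_at_top[of 2]
  proof eventually_elim
    case (elim lam)
    show ?case
      using prob_bounded_event_ge[OF assms(1,2) summable, of T "lam / 2" lam] assms(4) elim
      by (intro Liminf_bounded always_eventually) (simp add: K_def)
  qed
  have upper: "eventually (\<lambda>lam.
      liminf (\<lambda>m. ereal (measure (Omega b) (bounded_event b \<sigma> m T lam))) \<le> 1) at_top"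
    by (intro always_eventually allI order.trans[OF Liminf_le_Limsup Limsup_bounded])
      (auto simp: prob_le_1)
  have "((\<lambda>lam. ereal (1 - K * (lam / 2) powr (- b))) \<longlongrightarrow> 1) at_top"
    using tendsto_ereal[OF tendsto_one_minus_powr_neg_at_top[OF assms(1), of 2 K]] by (simp add: one_ereal_def)
  from tendsto_sandwich[OF lower upper this tendsto_const] show ?thesis .
qed

end
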